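(* Let $(A,\mu,\alpha,\beta)$ be a BiHom-commutative algebra (with $\mu(a\otimes b)=a\cdot b$) and let $D:A\to A$ be a derivation in the usual sense, i.e. $D(x\cdot y)=x\cdot D(y)+D(x)\cdot y$ for all $x,y$, commuting with $\alpha$ and $\beta$. Define $a\ast b=a\cdot D(b)$. Then $(A,\ast,\alpha,\beta)$ is a BiHom-Novikov algebra.
   Context: Work over a field. A BiHom-associative algebra is a 4-tuple $(A,\mu,\alpha,\beta)$ with $\alpha,\beta$ commuting linear maps, multiplicative for $\mu$, and $\alpha(x)\cdot(y\cdot z)=(x\cdot y)\cdot\beta(z)$; it is BiHom-commutative if $\beta(a)\cdot\alpha(b)=\beta(b)\cdot\alpha(a)$ for all $a,b$. A BiHom-Novikov algebra is a 4-tuple $(A,\ast,\alpha,\beta)$ with commuting linear maps $\alpha,\beta$ multiplicative for $\ast$ such that for all $x,y,z$: $(\beta(x)\ast\alpha(y))\ast\beta(z)-\alpha\beta(x)\ast(\alpha(y)\ast z)=(\beta(y)\ast\alpha(x))\ast\beta(z)-\alpha\beta(y)\ast(\alpha(x)\ast z)$ and $(x\ast\beta(y))\ast\alpha\beta(z)=(x\ast\beta(z))\ast\alpha\beta(y)$. *)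

theory Defs
  imports Main "HOL.Vector_Spaces"
begin

definition bilinear_map :: "('k::field \<Rightarrow> 'v::ab_group_add \<Rightarrow> 'v) \<Rightarrow> ('v \<Rightarrow> 'v \<Rightarrow> 'v) \<Rightarrow> bool" where
  "bilinear_map scl m \<longleftrightarrow> (\<forall>y. Vector_Spaces.linear scl scl (\<lambda>x. m x y)) \<and> (\<forall>x. Vector_Spaces.linear scl scl (\<lambda>y. m x y))"

definition BiHom_assoc_alg ::
  "('k::field \<Rightarrow> 'v::ab_group_add \<Rightarrow> 'v) \<Rightarrow> ('v \<Rightarrow> 'v \<Rightarrow> 'v) \<Rightarrow> ('v \<Rightarrow> 'v) \<Rightarrow> ('v \<Rightarrow> 'v) \<Rightarrow> bool" where
  "BiHom_assoc_alg scl m \<alpha> \<beta> \<longleftrightarrow>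
     vector_space scl \<and> bilinear_map scl m \<and> Vector_Spaces.linear scl scl \<alpha> \<and> Vector_Spaces.linear scl scl \<beta> \<and>
     \<alpha> \<circ> \<beta> = \<beta> \<circ> \<alpha> \<and>
     (\<forall>x y. \<alpha> (m x y) = m (\<alpha> x) (\<alpha> y)) \<and> (\<forall>x y. \<beta> (m x y) = m (\<beta> x) (\<beta> y)) \<and>
     (\<forall>x y z. m (\<alpha> x) (m y z) = m (m x y) (\<beta> z))"

definition BiHom_comm_alg ::
  "('k::field \<Rightarrow> 'v::ab_group_add \<Rightarrow> 'v) \<Rightarrow> ('v \<Rightarrow> 'v \<Rightarrow> 'v) \<Rightarrow> ('v \<Rightarrow> 'v) \<Rightarrow> ('v \<Rightarrow> 'v) \<Rightarrow> bool" where
  "BiHom_comm_alg scl m \<alpha> \<beta> \<longleftrightarrow> BiHom_assoc_alg scl m \<alpha> \<beta> \<and>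
     (\<forall>a b. m (\<beta> a) (\<alpha> b) = m (\<beta> b) (\<alpha> a))"

definition BiHom_Novikov_alg ::
  "('k::field \<Rightarrow> 'v::ab_group_add \<Rightarrow> 'v) \<Rightarrow> ('v \<Rightarrow> 'v \<Rightarrow> 'v) \<Rightarrow> ('v \<Rightarrow> 'v) \<Rightarrow> ('v \<Rightarrow> 'v) \<Rightarrow> bool" where
  "BiHom_Novikov_alg scl s \<alpha> \<beta> \<longleftrightarrow>
     vector_space scl \<and> bilinear_map scl s \<and> Vector_Spaces.linear scl scl \<alpha> \<and> Vector_Spaces.linear scl scl \<beta> \<and>
     \<alpha> \<circ> \<beta> = \<beta> \<circ> \<alpha> \<and>
     (\<forall>x y. \<alpha> (s x y) = s (\<alpha> x) (\<alpha> y)) \<and> (\<forall>x y. \<beta> (s x y) = s (\<beta> x) (\<beta> y)) \<and>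
     (\<forall>x y z. s (s (\<beta> x) (\<alpha> y)) (\<beta> z) - s (\<alpha> (\<beta> x)) (s (\<alpha> y) z)
            = s (s (\<beta> y) (\<alpha> x)) (\<beta> z) - s (\<alpha> (\<beta> y)) (s (\<alpha> x) z)) \<and>
     (\<forall>x y z. s (s x (\<beta> y)) (\<alpha> (\<beta> z)) = s (s x (\<beta> z)) (\<alpha> (\<beta> y)))"

end

theory Submission
  imports Defs
begin

text \<open>With \<open>a \<ast> b = a \<cdot> D b\<close>, the Leibniz rule turns the left-hand side of the first
  Novikov identity into \<open>-(\<alpha>\<beta> x \<cdot> (\<alpha> y \<cdot> D\<^sup>2 z))\<close>, which is symmetric in \<open>x, y\<close> by
  BiHom-associativity and BiHom-commutativity. The second identity is
  \<open>(x \<cdot> \<beta> D y) \<cdot> \<alpha>\<beta> D z = \<alpha> x \<cdot> (\<beta> D y \<cdot> \<alpha> D z)\<close>, symmetric in \<open>y, z\<close> by commutativity.\<close>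

lemma bilinear_map_compose_right:
  assumes "bilinear_map scl m" and "Vector_Spaces.linear scl scl D"
  shows "bilinear_map scl (\<lambda>a b. m a (D b))"
  using assms Vector_Spaces.linear_compose[OF assms(2)]
  unfolding bilinear_map_def comp_def by blast

locale BiHom_comm_algebra =
  fixes scl :: "'k::field \<Rightarrow> 'v::ab_group_add \<Rightarrow> 'v"
    and m :: "'v \<Rightarrow> 'v \<Rightarrow> 'v" and \<alpha> \<beta> :: "'v \<Rightarrow> 'v"
  assumes comm_alg: "BiHom_comm_alg scl m \<alpha> \<beta>"
begin

lemma vector_space: "vector_space scl"
  and bilinear: "bilinear_map scl m"
  and linear_\<alpha>: "Vector_Spaces.linear scl scl \<alpha>"
  and linear_\<beta>: "Vector_Spaces.linear scl scl \<beta>"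
  and \<alpha>_\<beta>_commute: "\<alpha> \<circ> \<beta> = \<beta> \<circ> \<alpha>"
  and \<alpha>_mult: "\<alpha> (m x y) = m (\<alpha> x) (\<alpha> y)"
  and \<beta>_mult: "\<beta> (m x y) = m (\<beta> x) (\<beta> y)"
  and assoc: "m (\<alpha> x) (m y z) = m (m x y) (\<beta> z)"
  and comm: "m (\<beta> a) (\<alpha> b) = m (\<beta> b) (\<alpha> a)"
  using comm_alg unfolding BiHom_comm_alg_def BiHom_assoc_alg_def by blast+

lemma \<alpha>_\<beta>_apply_commute: "\<alpha> (\<beta> x) = \<beta> (\<alpha> x)"
  using \<alpha>_\<beta>_commute by (metis comp_apply)

lemma mult_add_right: "m x (y + z) = m x y + m x z"
  using bilinear unfolding bilinear_map_def linear_iff by blast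

lemma left_commute: "m (\<alpha> (\<beta> x)) (m (\<alpha> y) w) = m (\<alpha> (\<beta> y)) (m (\<alpha> x) w)"
  by (metis assoc comm)

lemma right_commute: "m (m x (\<beta> u)) (\<alpha> (\<beta> v)) = m (m x (\<beta> v)) (\<alpha> (\<beta> u))"
  by (metis assoc comm \<alpha>_\<beta>_apply_commute)

end

locale BiHom_comm_algebra_derivation = BiHom_comm_algebra +
  fixes D :: "'v::ab_group_add \<Rightarrow> 'v"
  assumes linear_D: "Vector_Spaces.linear scl scl D"
    and Leibniz: "D (m x y) = m x (D y) + m (D x) y"
    and D_\<alpha>_commute: "D \<circ> \<alpha> = \<alpha> \<circ> D" and D_\<beta>_commute: "D \<circ> \<beta> = \<beta> \<circ> D"
begin

lemma D_\<alpha>: "D (\<alpha> x) = \<alpha> (D x)" and D_\<beta>: "D (\<beta> x) = \<beta> (D x)"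
  using D_\<alpha>_commute D_\<beta>_commute by (metis comp_apply)+

lemma derived_left_associator:
  "m (m (\<beta> x) (D (\<alpha> y))) (D (\<beta> z)) - m (\<alpha> (\<beta> x)) (D (m (\<alpha> y) (D z)))
     = - m (\<alpha> (\<beta> x)) (m (\<alpha> y) (D (D z)))"
proof -
  have "m (m (\<beta> x) (D (\<alpha> y))) (D (\<beta> z)) = m (\<alpha> (\<beta> x)) (m (\<alpha> (D y)) (D z))"
    by (simp add: D_\<alpha> D_\<beta> assoc)
  moreover have "D (m (\<alpha> y) (D z)) = m (\<alpha> y) (D (D z)) + m (\<alpha> (D y)) (D z)"
    by (simp add: Leibniz D_\<alpha>)
  ultimately show ?thesis by (simp add: mult_add_right)
qed

lemma derived_Novikov_left:
  "m (m (\<beta> x) (D (\<alpha> y))) (D (\<beta> z)) - m (\<alpha> (\<beta> x)) (D (m (\<alpha> y) (D z)))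
     = m (m (\<beta> y) (D (\<alpha> x))) (D (\<beta> z)) - m (\<alpha> (\<beta> y)) (D (m (\<alpha> x) (D z)))"
  unfolding derived_left_associator using left_commute by metis

lemma derived_Novikov_right:
  "m (m x (D (\<beta> y))) (D (\<alpha> (\<beta> z))) = m (m x (D (\<beta> z))) (D (\<alpha> (\<beta> y)))"
  by (simp add: D_\<alpha> D_\<beta> right_commute)

lemma derived_BiHom_Novikov: "BiHom_Novikov_alg scl (\<lambda>a b. m a (D b)) \<alpha> \<beta>"
proof -
  have "\<alpha> (m x (D y)) = m (\<alpha> x) (D (\<alpha> y))" "\<beta> (m x (D y)) = m (\<beta> x) (D (\<beta> y))" for x y
    by (simp_all only: \<alpha>_mult \<beta>_mult D_\<alpha> D_\<beta>)
  then show ?thesis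
    unfolding BiHom_Novikov_alg_def
    using vector_space bilinear_map_compose_right[OF bilinear linear_D] linear_\<alpha> linear_\<beta>
      \<alpha>_\<beta>_commute derived_Novikov_left derived_Novikov_right
    by blast
qed

end

theorem corollary2p9:
  fixes scl :: "'k::field \<Rightarrow> 'v::ab_group_add \<Rightarrow> 'v"
    and m :: "'v \<Rightarrow> 'v \<Rightarrow> 'v" and \<alpha> \<beta> D :: "'v \<Rightarrow> 'v"
  assumes "BiHom_comm_alg scl m \<alpha> \<beta>"
    and "Vector_Spaces.linear scl scl D"
    and "\<And>x y. D (m x y) = m x (D y) + m (D x) y"
    and "D \<circ> \<alpha> = \<alpha> \<circ> D" and "D \<circ> \<beta> = \<beta> \<circ> D"
  shows "BiHom_Novikov_alg scl (\<lambda>a b. m a (D b)) \<alpha> \<beta>"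
proof -
  interpret BiHom_comm_algebra_derivation scl m \<alpha> \<beta> D
    using assms unfolding BiHom_comm_algebra_derivation_def BiHom_comm_algebra_def
      BiHom_comm_algebra_derivation_axioms_def by blast
  show ?thesis by (rule derived_BiHom_Novikov)
qed

end
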